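(* Let $\varepsilon>0$ and $\vec{\delta}\in\mathbb{R}^d$ with $\|\vec{\delta}\|\le\varepsilon$. There is $n=\tilde{O}(d/\varepsilon^2)$ such that, if $\vec{y}_1,\dots,\vec{y}_n$ are i.i.d. $\mathcal{N}(0,I)$ in $\mathbb{R}^d$, $z_1,\dots,z_n$ are i.i.d. uniform Rademacher random variables independent of the $\vec{y}_i$, and $\hat{\Sigma}_2=\frac1n\sum_{i=1}^n z_i(\vec{y}_i\vec{\delta}^T+\vec{\delta}\vec{y}_i^T)$, then for any unit vector $\hat{\vec{v}}\in\mathbb{R}^d$, $$\mathbb{P}\left(|\hat{\vec{v}}^T\hat{\Sigma}_2\hat{\vec{v}}|>2\varepsilon^2\right)\le\mathrm{poly}\left(\frac{\varepsilon^2}{d}\right).$$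
   Context: $\tilde{O}$ hides polylogarithmic factors; $\mathrm{poly}(\varepsilon^2/d)$ denotes a quantity bounded by a polynomial in $\varepsilon^2/d$. *)

theory Defs
  imports "HOL-Probability.Probability"
begin

text \<open>Vectors in R^d are represented as functions nat => real, only indices j < d matter.
  A sample is a pair (Y, Z): Y i j is the j-th coordinate of the Gaussian vector y_i,
  Z i is the Rademacher sign z_i (i < n).\<close>

definition std_gaussian :: "real measure" where
  "std_gaussian = density lborel std_normal_density"

definition rademacher :: "real measure" where
  "rademacher = measure_pmf (pmf_of_set {-1, 1})"

definition sample_space :: "nat \<Rightarrow> nat \<Rightarrow> ((nat \<Rightarrow> nat \<Rightarrow> real) \<times> (nat \<Rightarrow> real)) measure" where
  "sample_space d n =
     (PiM {..<n} (\<lambda>_. PiM {..<d} (\<lambda>_. std_gaussian))) \<Otimes>\<^sub>M (PiM {..<n} (\<lambda>_. rademacher))"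

definition Sigma2 :: "nat \<Rightarrow> (nat \<Rightarrow> real) \<Rightarrow> (nat \<Rightarrow> nat \<Rightarrow> real) \<times> (nat \<Rightarrow> real)
                       \<Rightarrow> nat \<Rightarrow> nat \<Rightarrow> real" where
  "Sigma2 n \<delta> \<omega> j k = (1 / real n) * (\<Sum>i<n. snd \<omega> i * (fst \<omega> i j * \<delta> k + \<delta> j * fst \<omega> i k))"

definition quadform :: "nat \<Rightarrow> (nat \<Rightarrow> real) \<Rightarrow> (nat \<Rightarrow> nat \<Rightarrow> real) \<Rightarrow> real" where
  "quadform d v A = (\<Sum>j<d. \<Sum>k<d. v j * A j k * v k)"

definition vnorm :: "nat \<Rightarrow> (nat \<Rightarrow> real) \<Rightarrow> real" where
  "vnorm d v = sqrt (\<Sum>j<d. (v j)\<^sup>2)"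

end

theory Submission
  imports Defs
begin

text \<open>With \<open>c = \<langle>v, \<delta>\<rangle>\<close> the quadratic form collapses to
  \<open>v\<^sup>T \<Sigma>\<^sub>2 v = (2 c / n) S\<close>, where \<open>S = \<Sum>\<^sub>i z\<^sub>i \<langle>v, y\<^sub>i\<rangle>\<close>.
  Since \<open>z\<^sub>i\<^sup>2 = 1\<close>, conditioning on the signs shows that \<open>S\<close> has moment generating
  function exactly \<open>exp (n l\<^sup>2 / 2)\<close>, so the Chernoff bound gives
  \<open>P(|S| > n \<epsilon>) \<le> 2 exp (- n \<epsilon>\<^sup>2 / 2)\<close>. As \<open>|c| \<le> \<epsilon>\<close>, the event
  \<open>|v\<^sup>T \<Sigma>\<^sub>2 v| > 2 \<epsilon>\<^sup>2\<close> forces \<open>|S| > n \<epsilon>\<close>, and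
  \<open>n \<approx> 2 (1 + d/\<epsilon>\<^sup>2) (1 + ln (1 + d/\<epsilon>\<^sup>2))\<close> makes this at most \<open>2 \<epsilon>\<^sup>2 / d\<close>.\<close>

lemma sets_std_gaussian [measurable_cong, simp]: "sets std_gaussian = sets borel"
  unfolding std_gaussian_def by simp

lemma prob_space_std_gaussian: "prob_space std_gaussian"
  unfolding std_gaussian_def by (rule prob_space_normal_density) simp

lemma nn_integral_exp_std_gaussian:
  "(\<integral>\<^sup>+x. ennreal (exp (t * x)) \<partial>std_gaussian) = ennreal (exp (t\<^sup>2 / 2))"
proof -
  have complete_square: "std_normal_density x * exp (t * x) = exp (t\<^sup>2 / 2) * std_normal_density (x - t)" for x
    by (simp add: std_normal_density_def exp_add[symmetric] power2_eq_square field_simps)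
  have total_mass: "(\<integral>\<^sup>+x. ennreal (std_normal_density x) \<partial>lborel) = 1"
    using prob_space.emeasure_space_1[OF prob_space_std_gaussian]
    by (simp add: std_gaussian_def emeasure_density)
  have "(\<integral>\<^sup>+x. ennreal (exp (t * x)) \<partial>std_gaussian)
      = (\<integral>\<^sup>+x. ennreal (exp (t\<^sup>2 / 2)) * ennreal (std_normal_density (x - t)) \<partial>lborel)"
    unfolding std_gaussian_def
    by (subst nn_integral_density) (auto simp: ennreal_mult'[symmetric] complete_square)
  also have "\<dots> = ennreal (exp (t\<^sup>2 / 2)) * (\<integral>\<^sup>+x. ennreal (std_normal_density (x - t)) \<partial>lborel)"
    by (rule nn_integral_cmult) auto
  also have "(\<integral>\<^sup>+x. ennreal (std_normal_density (x - t)) \<partial>lborel) = 1"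
    using nn_integral_real_affine[of "\<lambda>x. ennreal (std_normal_density (x - t))" 1 t]
    by (simp add: total_mass)
  finally show ?thesis by simp
qed

lemma nn_integral_exp_gaussian_vector:
  fixes d :: nat
  shows "(\<integral>\<^sup>+y. ennreal (exp (c * (\<Sum>j<d. v j * y j))) \<partial>PiM {..<d} (\<lambda>_. std_gaussian))
    = ennreal (exp (c\<^sup>2 * (\<Sum>j<d. (v j)\<^sup>2) / 2))"
proof -
  interpret product_sigma_finite "\<lambda>_. std_gaussian"
    unfolding product_sigma_finite_def
    using prob_space_imp_sigma_finite[OF prob_space_std_gaussian] by simp
  have "(\<integral>\<^sup>+y. ennreal (exp (c * (\<Sum>j<d. v j * y j))) \<partial>PiM {..<d} (\<lambda>_. std_gaussian))
      = (\<integral>\<^sup>+y. (\<Prod>j<d. ennreal (exp (c * v j * y j))) \<partial>PiM {..<d} (\<lambda>_. std_gaussian))"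
    by (simp add: prod_ennreal exp_sum sum_distrib_left mult.assoc)
  also have "\<dots> = (\<Prod>j<d. \<integral>\<^sup>+x. ennreal (exp (c * v j * x)) \<partial>std_gaussian)"
    by (rule product_nn_integral_prod) auto
  also have "\<dots> = ennreal (\<Prod>j<d. exp ((c * v j)\<^sup>2 / 2))"
    by (simp add: nn_integral_exp_std_gaussian prod_ennreal)
  also have "(\<Prod>j<d. exp ((c * v j)\<^sup>2 / 2)) = exp (c\<^sup>2 * (\<Sum>j<d. (v j)\<^sup>2) / 2)"
    by (simp add: exp_sum[symmetric] sum_divide_distrib sum_distrib_left power_mult_distrib)
  finally show ?thesis .
qed

lemma prob_space_rademacher: "prob_space rademacher"
  unfolding rademacher_def by (rule prob_space_measure_pmf)

lemma sets_rademacher: "sets rademacher = sets (count_space UNIV)"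
  unfolding rademacher_def by simp

lemma borel_measurable_rademacher: "(f :: real \<Rightarrow> 'b::topological_space) \<in> borel_measurable rademacher"
  by (simp add: measurable_cong_sets[OF sets_rademacher refl])

lemma AE_rademacher_square: "AE z in rademacher. z\<^sup>2 = 1"
  unfolding rademacher_def by (auto simp: AE_measure_pmf_iff)

definition signed_projection_sum ::
  "nat \<Rightarrow> nat \<Rightarrow> (nat \<Rightarrow> real) \<Rightarrow> (nat \<Rightarrow> nat \<Rightarrow> real) \<times> (nat \<Rightarrow> real) \<Rightarrow> real" where
  "signed_projection_sum d n v \<omega> = (\<Sum>i<n. snd \<omega> i * (\<Sum>j<d. v j * fst \<omega> i j))"

lemma prob_space_sample_space: "prob_space (sample_space d n)"
  unfolding sample_space_def
  by (intro prob_space_pair prob_space_PiM prob_space_std_gaussian prob_space_rademacher)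

lemma borel_measurable_sample_gaussian:
  assumes "i < n" "j < d"
  shows "(\<lambda>\<omega>. fst \<omega> i j) \<in> borel_measurable (sample_space d n)"
proof -
  have [measurable]: "i \<in> {..<n}" "j \<in> {..<d}" using assms by auto
  have "(\<lambda>Y. Y i) \<in> PiM {..<n} (\<lambda>_. PiM {..<d} (\<lambda>_. std_gaussian)) \<rightarrow>\<^sub>M PiM {..<d} (\<lambda>_. std_gaussian)"
       "(\<lambda>y. y j) \<in> borel_measurable (PiM {..<d} (\<lambda>_. std_gaussian))"
    by measurable
  then have "(\<lambda>Y. Y i j) \<in> borel_measurable (PiM {..<n} (\<lambda>_. PiM {..<d} (\<lambda>_. std_gaussian)))"
    by (rule measurable_compose)
  then show ?thesis
    unfolding sample_space_def by (rule measurable_compose[OF measurable_fst])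
qed

lemma borel_measurable_sample_sign:
  assumes "i < n"
  shows "(\<lambda>\<omega>. snd \<omega> i) \<in> borel_measurable (sample_space d n)"
proof -
  have [measurable]: "i \<in> {..<n}" using assms by auto
  show ?thesis
    unfolding sample_space_def
    by (rule measurable_compose[OF _ borel_measurable_rademacher]) measurable
qed

lemma borel_measurable_signed_projection_sum [measurable]:
  "signed_projection_sum d n v \<in> borel_measurable (sample_space d n)"
  unfolding signed_projection_sum_def
  by (intro borel_measurable_sum borel_measurable_times borel_measurable_const
      borel_measurable_sample_gaussian borel_measurable_sample_sign) auto

lemma nn_integral_exp_signed_projection_sum:
  "(\<integral>\<^sup>+\<omega>. ennreal (exp (l * signed_projection_sum d n v \<omega>)) \<partial>sample_space d n)
    = ennreal (exp (real n * (\<Sum>j<d. (v j)\<^sup>2) * l\<^sup>2 / 2))"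
proof -
  define s where "s = (\<Sum>j<d. (v j)\<^sup>2)"
  let ?G = "PiM {..<d} (\<lambda>_. std_gaussian)"
  let ?Y = "PiM {..<n} (\<lambda>_. ?G)"
  let ?Z = "PiM {..<n} (\<lambda>_. rademacher)"
  interpret Y: product_sigma_finite "\<lambda>_. ?G"
    unfolding product_sigma_finite_def
    using prob_space_imp_sigma_finite[OF prob_space_PiM[OF prob_space_std_gaussian]] by blast
  interpret Z: product_sigma_finite "\<lambda>_. rademacher"
    unfolding product_sigma_finite_def
    using prob_space_imp_sigma_finite[OF prob_space_rademacher] by simp
  interpret YZ: pair_sigma_finite ?Y ?Z
    unfolding pair_sigma_finite_def
    by (intro conjI prob_space_imp_sigma_finite prob_space_PiM prob_space_std_gaussian prob_space_rademacher)
  have conditional_mgf: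
    "(\<integral>\<^sup>+Y. ennreal (exp (l * signed_projection_sum d n v (Y, z))) \<partial>?Y)
       = (\<Prod>i<n. ennreal (exp ((l * z i)\<^sup>2 * s / 2)))" for z
  proof -
    have "(\<integral>\<^sup>+Y. ennreal (exp (l * signed_projection_sum d n v (Y, z))) \<partial>?Y)
       = (\<integral>\<^sup>+Y. (\<Prod>i<n. ennreal (exp (l * z i * (\<Sum>j<d. v j * Y i j)))) \<partial>?Y)"
      unfolding signed_projection_sum_def
      by (simp add: prod_ennreal prod_nonneg exp_sum sum_distrib_left mult.assoc)
    also have "\<dots> = (\<Prod>i<n. \<integral>\<^sup>+y. ennreal (exp (l * z i * (\<Sum>j<d. v j * y j))) \<partial>?G)"
      by (rule Y.product_nn_integral_prod) auto
    finally show ?thesis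
      by (simp add: nn_integral_exp_gaussian_vector s_def power_mult_distrib)
  qed
  have "(\<integral>\<^sup>+\<omega>. ennreal (exp (l * signed_projection_sum d n v \<omega>)) \<partial>sample_space d n)
      = (\<integral>\<^sup>+z. (\<Prod>i<n. ennreal (exp ((l * z i)\<^sup>2 * s / 2))) \<partial>?Z)"
    unfolding sample_space_def
    using borel_measurable_signed_projection_sum[of d n v, unfolded sample_space_def, measurable]
    by (subst YZ.nn_integral_snd[symmetric]) (measurable, simp add: conditional_mgf)
  also have "\<dots> = (\<Prod>i<n. \<integral>\<^sup>+z. ennreal (exp ((l * z)\<^sup>2 * s / 2)) \<partial>rademacher)"
    by (rule Z.product_nn_integral_prod) (auto intro: borel_measurable_rademacher)
  also have "(\<integral>\<^sup>+z. ennreal (exp ((l * z)\<^sup>2 * s / 2)) \<partial>rademacher) = ennreal (exp (l\<^sup>2 * s / 2))"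
    using AE_rademacher_square prob_space.emeasure_space_1[OF prob_space_rademacher]
    by (subst nn_integral_cong_AE[where v = "\<lambda>_. ennreal (exp (l\<^sup>2 * s / 2))"])
      (auto simp: power_mult_distrib)
  finally show ?thesis
    by (simp add: s_def ennreal_power exp_of_nat_mult[symmetric] mult_ac)
qed

lemma (in prob_space) subgaussian_tail:
  assumes [measurable]: "X \<in> borel_measurable M"
    and mgf: "\<And>l. (\<integral>\<^sup>+x. ennreal (exp (l * X x)) \<partial>M) \<le> ennreal (exp (s * l\<^sup>2 / 2))"
    and "s > 0" "a > 0"
  shows "prob {x \<in> space M. \<bar>X x\<bar> > a} \<le> 2 * exp (- a\<^sup>2 / (2 * s))"
proof -
  define t where "t = a / s"
  have "t > 0" using assms by (simp add: t_def)
  let ?E = "{x \<in> space M. \<bar>X x\<bar> > a}"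
  have markov: "indicator ?E x \<le> (ennreal (exp (t * X x)) + ennreal (exp (- t * X x))) * ennreal (exp (- t * a))"
    for x
  proof (cases "x \<in> ?E")
    case True
    then have "exp (t * a) \<le> exp (t * \<bar>X x\<bar>)"
      using \<open>t > 0\<close> by simp
    also have "\<dots> \<le> exp (t * X x) + exp (- t * X x)"
      by (cases "X x \<ge> 0") (auto simp: add_increasing add_increasing2)
    finally have "1 \<le> (exp (t * X x) + exp (- t * X x)) * exp (- t * a)"
      by (simp add: exp_minus field_simps)
    with True show ?thesis
      by (simp add: ennreal_mult'[symmetric] ennreal_plus[symmetric] del: ennreal_plus)
  qed simp
  have "emeasure M ?E = (\<integral>\<^sup>+x. indicator ?E x \<partial>M)"
    by simp
  also have "\<dots> \<le> (\<integral>\<^sup>+x. (ennreal (exp (t * X x)) + ennreal (exp (- t * X x))) * ennreal (exp (- t * a)) \<partial>M)"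
    by (rule nn_integral_mono) (rule markov)
  also have "\<dots> = ((\<integral>\<^sup>+x. ennreal (exp (t * X x)) \<partial>M) + (\<integral>\<^sup>+x. ennreal (exp (- t * X x)) \<partial>M))
                   * ennreal (exp (- t * a))"
    by (simp add: nn_integral_multc nn_integral_add)
  also have "\<dots> \<le> (ennreal (exp (s * t\<^sup>2 / 2)) + ennreal (exp (s * t\<^sup>2 / 2))) * ennreal (exp (- t * a))"
    using mgf[of t] mgf[of "- t"] by (intro mult_right_mono add_mono) auto
  also have "\<dots> = ennreal (2 * exp (- a\<^sup>2 / (2 * s)))"
    using \<open>s > 0\<close>
    by (simp add: t_def ennreal_mult'[symmetric] ennreal_plus[symmetric] exp_add[symmetric] power2_eq_square
        field_simps del: ennreal_plus)
  finally show ?thesis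
    by (simp add: emeasure_eq_measure)
qed

lemma sum_symmetrized_outer_product:
  fixes d :: nat and v y w :: "nat \<Rightarrow> real"
  shows "(\<Sum>j<d. \<Sum>k<d. v j * (y j * w k + w j * y k) * v k) = 2 * (\<Sum>k<d. v k * w k) * (\<Sum>j<d. v j * y j)"
proof -
  have "(\<Sum>j<d. \<Sum>k<d. v j * (y j * w k + w j * y k) * v k)
      = (\<Sum>j<d. \<Sum>k<d. (v j * y j) * (v k * w k)) + (\<Sum>j<d. \<Sum>k<d. (v j * w j) * (v k * y k))"
    unfolding sum.distrib[symmetric] by (intro sum.cong refl) (simp add: algebra_simps)
  also have "\<dots> = 2 * (\<Sum>k<d. v k * w k) * (\<Sum>j<d. v j * y j)"
    by (simp add: sum_product[symmetric])
  finally show ?thesis .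
qed

lemma quadform_Sigma2:
  "quadform d v (Sigma2 n \<delta> \<omega>) = 2 / real n * (\<Sum>k<d. v k * \<delta> k) * signed_projection_sum d n v \<omega>"
proof -
  have "quadform d v (Sigma2 n \<delta> \<omega>)
      = 1 / real n * (\<Sum>i<n. snd \<omega> i * (\<Sum>j<d. \<Sum>k<d. v j * (fst \<omega> i j * \<delta> k + \<delta> j * fst \<omega> i k) * v k))"
    unfolding quadform_def Sigma2_def
    by (simp add: sum_distrib_left sum_distrib_right mult_ac sum.swap[of _ "{..<n}"])
  also have "\<dots> = 1 / real n * (\<Sum>i<n. snd \<omega> i * (2 * (\<Sum>k<d. v k * \<delta> k) * (\<Sum>j<d. v j * fst \<omega> i j)))"
    by (simp only: sum_symmetrized_outer_product)
  finally show ?thesis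
    by (simp add: signed_projection_sum_def sum_distrib_left mult_ac)
qed

lemma abs_sum_mult_le_vnorm:
  fixes d :: nat and v w :: "nat \<Rightarrow> real"
  shows "\<bar>\<Sum>k<d. v k * w k\<bar> \<le> vnorm d v * vnorm d w"
proof -
  have "\<bar>\<Sum>k<d. v k * w k\<bar> = sqrt ((\<Sum>k<d. v k * w k)\<^sup>2)"
    by simp
  also have "\<dots> \<le> sqrt ((\<Sum>k<d. (v k)\<^sup>2) * (\<Sum>k<d. (w k)\<^sup>2))"
    by (rule real_sqrt_le_mono) (rule Cauchy_Schwarz_ineq_sum)
  finally show ?thesis
    by (simp add: vnorm_def real_sqrt_mult)
qed

lemma Sigma2_quadform_tail:
  assumes "n \<ge> 1" "vnorm d v = 1" "vnorm d \<delta> \<le> \<epsilon>" "\<epsilon> > 0"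
  shows "measure (sample_space d n) {\<omega> \<in> space (sample_space d n). \<bar>quadform d v (Sigma2 n \<delta> \<omega>)\<bar> > 2 * \<epsilon>\<^sup>2}
    \<le> 2 * exp (- real n * \<epsilon>\<^sup>2 / 2)"
proof -
  interpret prob_space "sample_space d n"
    by (rule prob_space_sample_space)
  let ?S = "signed_projection_sum d n v"
  have unit: "(\<Sum>j<d. (v j)\<^sup>2) = 1"
    using \<open>vnorm d v = 1\<close> by (simp add: vnorm_def)
  have inner_le: "\<bar>\<Sum>k<d. v k * \<delta> k\<bar> \<le> \<epsilon>"
    using abs_sum_mult_le_vnorm[of v \<delta> d] assms by simp
  have n_pos: "real n > 0"
    using \<open>n \<ge> 1\<close> by simp
  have "\<bar>?S \<omega>\<bar> > real n * \<epsilon>" if "\<bar>quadform d v (Sigma2 n \<delta> \<omega>)\<bar> > 2 * \<epsilon>\<^sup>2" for \<omega>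
  proof -
    have "2 * \<epsilon>\<^sup>2 < 2 / real n * \<bar>\<Sum>k<d. v k * \<delta> k\<bar> * \<bar>?S \<omega>\<bar>"
      using that n_pos by (simp add: quadform_Sigma2 abs_mult)
    also have "\<dots> \<le> 2 / real n * \<epsilon> * \<bar>?S \<omega>\<bar>"
      using inner_le n_pos by (intro mult_right_mono mult_left_mono) auto
    finally show ?thesis
      using n_pos \<open>\<epsilon> > 0\<close> by (simp add: power2_eq_square field_simps)
  qed
  then have "measure (sample_space d n) {\<omega> \<in> space (sample_space d n). \<bar>quadform d v (Sigma2 n \<delta> \<omega>)\<bar> > 2 * \<epsilon>\<^sup>2}
      \<le> prob {\<omega> \<in> space (sample_space d n). \<bar>?S \<omega>\<bar> > real n * \<epsilon>}"
    by (intro finite_measure_mono) auto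
  also have "\<dots> \<le> 2 * exp (- (real n * \<epsilon>)\<^sup>2 / (2 * real n))"
    using n_pos \<open>\<epsilon> > 0\<close>
    by (intro subgaussian_tail borel_measurable_signed_projection_sum)
      (simp_all add: nn_integral_exp_signed_projection_sum unit)
  finally show ?thesis
    using n_pos by (simp add: power2_eq_square mult_ac)
qed

lemma exp_neg_sample_size_le:
  assumes "d \<ge> 1" "\<epsilon> > 0"
    and n: "2 * (1 + real d / \<epsilon>\<^sup>2) * (1 + ln (1 + real d / \<epsilon>\<^sup>2)) \<le> real n"
  shows "exp (- real n * \<epsilon>\<^sup>2 / 2) \<le> \<epsilon>\<^sup>2 / real d"
proof -
  define u where "u = real d / \<epsilon>\<^sup>2"
  have "u > 0" "ln (1 + u) \<ge> 0"
    using assms by (simp_all add: u_def)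
  have "(1 + u) * \<epsilon>\<^sup>2 = \<epsilon>\<^sup>2 + real d"
    using \<open>\<epsilon> > 0\<close> unfolding u_def by (simp add: field_simps)
  then have "(1 + u) * \<epsilon>\<^sup>2 \<ge> 1"
    using \<open>d \<ge> 1\<close> by (simp add: add_increasing)
  then have "ln (1 + u) \<le> (1 + u) * \<epsilon>\<^sup>2 * (1 + ln (1 + u))"
    using \<open>ln (1 + u) \<ge> 0\<close> mult_mono[of 1 "(1 + u) * \<epsilon>\<^sup>2" "ln (1 + u)" "1 + ln (1 + u)"] by simp
  also have "\<dots> \<le> real n * \<epsilon>\<^sup>2 / 2"
    using mult_right_mono[OF n[folded u_def], of "\<epsilon>\<^sup>2 / 2"] by (simp add: algebra_simps)
  finally have "exp (- real n * \<epsilon>\<^sup>2 / 2) \<le> exp (- ln (1 + u))"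
    by simp
  also have "\<dots> = 1 / (1 + u)"
    using \<open>u > 0\<close> by (simp add: exp_minus inverse_eq_divide)
  also have "\<dots> \<le> 1 / u"
    using \<open>u > 0\<close> by (simp add: frac_le)
  finally show ?thesis
    by (simp add: u_def)
qed
lemma exists_sample_size:
  assumes "u \<ge> 0"
  obtains n :: nat where "n \<ge> 1"
    "2 * (1 + u) * (1 + ln (1 + u)) \<le> real n" "real n \<le> 3 * (1 + u) * (1 + ln (1 + u))"
proof
  define B where "B = (1 + u) * (1 + ln (1 + u))"
  have "B \<ge> 1"
    unfolding B_def using assms mult_mono[of 1 "1 + u" 1 "1 + ln (1 + u)"] by simp
  moreover have "2 * (1 + u) * (1 + ln (1 + u)) = 2 * B" "3 * (1 + u) * (1 + ln (1 + u)) = 3 * B"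
    by (simp_all add: B_def)
  ultimately show "nat \<lceil>2 * B\<rceil> \<ge> 1" "2 * (1 + u) * (1 + ln (1 + u)) \<le> real (nat \<lceil>2 * B\<rceil>)"
    "real (nat \<lceil>2 * B\<rceil>) \<le> 3 * (1 + u) * (1 + ln (1 + u))"
    by linarith+
qed

theorem lemma8:
  shows "\<exists>(C::real) (k::nat) (K::real) (a::real). C > 0 \<and> K > 0 \<and> a > 0 \<and>
    (\<forall>(d::nat) (\<epsilon>::real) (\<delta>::nat \<Rightarrow> real). d \<ge> 1 \<and> \<epsilon> > 0 \<and> vnorm d \<delta> \<le> \<epsilon> \<longrightarrow>
      (\<exists>n::nat. n \<ge> 1 \<and>
         real n \<le> C * (1 + real d / \<epsilon>\<^sup>2) * (1 + ln (1 + real d / \<epsilon>\<^sup>2)) ^ k \<and>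
         (\<forall>v::nat \<Rightarrow> real. vnorm d v = 1 \<longrightarrow>
            measure (sample_space d n)
              {\<omega> \<in> space (sample_space d n). \<bar>quadform d v (Sigma2 n \<delta> \<omega>)\<bar> > 2 * \<epsilon>\<^sup>2}
            \<le> K * (\<epsilon>\<^sup>2 / real d) powr a)))"
proof (rule exI[of _ 3], rule exI[of _ 1], rule exI[of _ 2], rule exI[of _ 1], intro conjI allI impI)
  fix d :: nat and \<epsilon> :: real and \<delta> :: "nat \<Rightarrow> real"
  assume "d \<ge> 1 \<and> \<epsilon> > 0 \<and> vnorm d \<delta> \<le> \<epsilon>"
  then have d: "d \<ge> 1" and \<epsilon>: "\<epsilon> > 0" and \<delta>: "vnorm d \<delta> \<le> \<epsilon>"
    by auto
  obtain n where n: "n \<ge> 1" "2 * (1 + real d / \<epsilon>\<^sup>2) * (1 + ln (1 + real d / \<epsilon>\<^sup>2)) \<le> real n"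
    "real n \<le> 3 * (1 + real d / \<epsilon>\<^sup>2) * (1 + ln (1 + real d / \<epsilon>\<^sup>2))"
    using exists_sample_size[of "real d / \<epsilon>\<^sup>2"] by auto
  have "measure (sample_space d n)
          {\<omega> \<in> space (sample_space d n). \<bar>quadform d v (Sigma2 n \<delta> \<omega>)\<bar> > 2 * \<epsilon>\<^sup>2}
        \<le> 2 * (\<epsilon>\<^sup>2 / real d) powr 1" if "vnorm d v = 1" for v
    using Sigma2_quadform_tail[OF \<open>n \<ge> 1\<close> that \<delta> \<epsilon>] exp_neg_sample_size_le[OF d \<epsilon> n(2)] d
    by simp
  with n show "\<exists>n. n \<ge> 1 \<and> real n \<le> 3 * (1 + real d / \<epsilon>\<^sup>2) * (1 + ln (1 + real d / \<epsilon>\<^sup>2)) ^ 1 \<and>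
         (\<forall>v. vnorm d v = 1 \<longrightarrow>
            measure (sample_space d n)
              {\<omega> \<in> space (sample_space d n). \<bar>quadform d v (Sigma2 n \<delta> \<omega>)\<bar> > 2 * \<epsilon>\<^sup>2}
            \<le> 2 * (\<epsilon>\<^sup>2 / real d) powr 1)"
    by auto
qed simp_all

end
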